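(* Let $n\ge 1$ be an integer, $N=2^n$, and let $t\in[0,N)$ be a non-integer real number. Then $$\frac{1}{N}\sum_{k=0}^{N-1} p_{N,t}(k)\,\cot\!\Big((t-k)\frac{\pi}{N}\Big)=\cot(t\pi).$$
   Context: For a positive integer $N$, a non-integer real $t$ and an integer $k$, define $c_{N,t}(k)=\dfrac{1}{N}\dfrac{\sin((t-k)\pi)}{\sin\!\big((t-k)\frac{\pi}{N}\big)}$ and $p_{N,t}(k)=c_{N,t}(k)^2=\dfrac{1}{N^2}\dfrac{\sin^2((t-k)\pi)}{\sin^2\!\big((t-k)\frac{\pi}{N}\big)}$. (For $0\le k<N$ and $t\in(0,N)$ non-integer, the denominators are nonzero.) *)

theory Defs
  imports Complex_Main
begin

definition c_coef :: "nat \<Rightarrow> real \<Rightarrow> int \<Rightarrow> real" where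
  "c_coef N t k = (1 / real N) * (sin ((t - real_of_int k) * pi) / sin ((t - real_of_int k) * (pi / real N)))"

definition p_coef :: "nat \<Rightarrow> real \<Rightarrow> int \<Rightarrow> real" where
  "p_coef N t k = (c_coef N t k)\<^sup>2"

end

theory Submission
  imports Defs
begin

text \<open>Since \<open>sin\<^sup>2((t - k)\<pi>) = sin\<^sup>2(t\<pi>)\<close>, the \<open>k\<close>-th summand is
  \<open>sin\<^sup>2(t\<pi>)/N\<^sup>2 \<cdot> f((t - k)\<pi>/N)\<close> with \<open>f(a) = cos a / sin\<^sup>3 a\<close>.
  From \<open>cos\<^sup>4 a - sin\<^sup>4 a = cos 2a\<close> one gets the duplication formula
  \<open>f(a) + f(a - \<pi>/2) = 8 f(2a)\<close>; pairing the nodes \<open>k\<close> and \<open>k + N/2\<close> and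
  inducting on \<open>n\<close> gives \<open>\<Sum>\<^sub>k f(y - k\<pi>/N) = N\<^sup>3 f(N y)\<close> for \<open>N = 2\<^sup>n\<close>.
  At \<open>y = t\<pi>/N\<close> the factors \<open>N\<^sup>3\<close> and \<open>sin\<^sup>2(t\<pi>)\<close> cancel, leaving \<open>cot(t\<pi>)\<close>.\<close>

definition cot_div_sin_sq :: "real \<Rightarrow> real" where
  "cot_div_sin_sq a = cos a / sin a ^ 3"

lemma cot_div_sin_sq_duplication:
  "cot_div_sin_sq a + cot_div_sin_sq (a - pi/2) = 8 * cot_div_sin_sq (2*a)"
proof -
  have s: "sin (a - pi/2) = - cos a" by (simp add: sin_diff)
  have c: "cos (a - pi/2) = sin a" by (simp add: cos_diff)
  show ?thesis
  proof (cases "sin a = 0 \<or> cos a = 0")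
    case True
    then show ?thesis unfolding cot_div_sin_sq_def s c by (auto simp: sin_double)
  next
    case False
    then have "cos a / sin a ^ 3 - sin a / cos a ^ 3
        = (cos a ^ 4 - sin a ^ 4) / (sin a ^ 3 * cos a ^ 3)"
      by (simp add: field_simps eval_nat_numeral)
    also have "cos a ^ 4 - sin a ^ 4 = (cos a ^ 2 - sin a ^ 2) * (sin a ^ 2 + cos a ^ 2)"
      by algebra
    also have "\<dots> = cos (2*a)" by (simp add: cos_double)
    also have "sin a ^ 3 * cos a ^ 3 = sin (2*a) ^ 3 / 8"
      by (simp add: sin_double power_mult_distrib)
    finally show ?thesis unfolding cot_div_sin_sq_def s c by simp
  qed
qed

lemma sum_cot_div_sin_sq_dyadic:
  "(\<Sum>k = 0..<(2::nat)^n. cot_div_sin_sq (y - real k * pi / 2^n))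
     = 8^n * cot_div_sin_sq (2^n * y)"
proof (induction n arbitrary: y)
  case 0
  then show ?case by simp
next
  case (Suc n)
  define M :: nat where "M = 2^n"
  let ?f = "\<lambda>k::nat. cot_div_sin_sq (y - real k * pi / 2^Suc n)"
  have "(\<Sum>k = 0..<(2::nat)^Suc n. ?f k) = (\<Sum>k = 0..<M. ?f k) + (\<Sum>k = M..<M+M. ?f k)"
    by (simp add: M_def sum.atLeastLessThan_concat flip: mult_2)
  also have "(\<Sum>k = M..<M+M. ?f k) = (\<Sum>k = 0..<M. ?f (k + M))"
    using sum.shift_bounds_nat_ivl[of ?f 0 M M] by simp
  also have "(\<Sum>k = 0..<M. ?f k) + (\<Sum>k = 0..<M. ?f (k + M))
      = (\<Sum>k = 0..<M. 8 * cot_div_sin_sq (2*y - real k * pi / 2^n))"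
    unfolding sum.distrib[symmetric]
  proof (rule sum.cong)
    fix k
    have "y - real (k + M) * pi / 2 ^ Suc n = (y - real k * pi / 2 ^ Suc n) - pi/2"
      by (simp add: M_def field_simps)
    moreover have "2 * (y - real k * pi / 2 ^ Suc n) = 2*y - real k * pi / 2^n"
      by (simp add: field_simps)
    ultimately show "?f k + ?f (k + M) = 8 * cot_div_sin_sq (2*y - real k * pi / 2^n)"
      by (simp only: cot_div_sin_sq_duplication)
  qed simp
  also have "\<dots> = 8^Suc n * cot_div_sin_sq (2^Suc n * y)"
    using Suc.IH[of "2*y"] by (simp add: sum_distrib_left[symmetric] M_def mult.left_commute mult.assoc)
  finally show ?case .
qed

lemma sin_sq_diff_nat_times_pi: "sin ((t - real k) * pi) ^ 2 = sin (t * pi) ^ 2"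
proof -
  have "((-1::real) ^ k) ^ 2 = 1" by (simp flip: power_mult)
  then show ?thesis by (simp add: left_diff_distrib sin_diff cos_npi power_mult_distrib)
qed

lemma p_coef_mult_cot:
  "p_coef N t (int k) * cot ((t - real k) * (pi / real N))
    = sin (t * pi) ^ 2 / real N ^ 2 * cot_div_sin_sq (t * pi / N - real k * pi / N)"
proof -
  have "(t - real k) * (pi / real N) = t * pi / N - real k * pi / N"
    by (simp add: diff_divide_distrib left_diff_distrib)
  then show ?thesis
    unfolding p_coef_def c_coef_def cot_def cot_div_sin_sq_def
      sin_sq_diff_nat_times_pi[of t k, symmetric]
    by (simp add: power_divide power2_eq_square power3_eq_cube)
qed

theorem mainTheorem1:
  fixes n :: nat and t :: real
  assumes "n \<ge> 1"
    and "0 \<le> t" and "t < real (2 ^ n)"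
    and "t \<notin> \<int>"
  shows "(1 / real (2 ^ n)) * (\<Sum>k = 0..<(2 ^ n :: nat).
            p_coef (2 ^ n) t (int k) * cot ((t - real k) * (pi / real (2 ^ n))))
         = cot (t * pi)"
proof -
  define N :: real where "N = 2^n"
  have "sin (t * pi) \<noteq> 0" using assms(4) sin_times_pi_eq_0 by blast
  moreover have "N > 0" by (simp add: N_def)
  moreover have "(8::real)^n = N^3"
    using power_mult[of "2::real" 3 n] power_mult[of "2::real" n 3] by (simp add: N_def mult.commute)
  moreover have "(\<Sum>k = 0..<(2 ^ n :: nat).
            p_coef (2 ^ n) t (int k) * cot ((t - real k) * (pi / real (2 ^ n))))
      = (\<Sum>k = 0..<(2 ^ n :: nat).
            sin (t * pi) ^ 2 / N^2 * cot_div_sin_sq (t * pi / N - real k * pi / N))"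
    by (rule sum.cong[OF refl], subst p_coef_mult_cot) (simp_all add: N_def)
  moreover have "\<dots> = sin (t * pi) ^ 2 / N^2 * (8^n * cot_div_sin_sq (t * pi))"
    using sum_cot_div_sin_sq_dyadic[where n = n and y = "t * pi / N"]
    unfolding sum_distrib_left[symmetric] by (simp add: N_def)
  ultimately show ?thesis
    by (simp add: N_def cot_div_sin_sq_def cot_def field_simps power2_eq_square power3_eq_cube)
qed

end
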